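(* Let $C\subseteq\mathbb{F}_q^{2n}$ be a symplectic self-orthogonal $\mathbb F_q$-linear code of dimension $n-k$ (so that $Q(C)$ is an $[[n,k]]_q$ stabilizer code), and let $\emptyset\neq I\subsetneq J\subseteq\{1,\dots,n\}$. Assume $\mathrm{swt}(C)\geq|I|+1$. If \[n+k-2|J|+2|I|>0\quad\text{and}\quad \mathrm{gsw}_{\,n+k-2|J|+2|I|}\left(C^{\perp_s}\right)\geq n-|J|+1,\] then $\sigma_I\left[\pi_J\left(C^{\perp_s}\right)\right]\neq\sigma_I(C)$.
   Context: Vectors of $\mathbb{F}_q^{2n}$ are written $(\mathbf a|\mathbf b)$, coordinate pair $(a_j,b_j)$ indexed by $j\in\{1,\dots,n\}$. Symplectic form $(\mathbf a|\mathbf b)\cdot_s(\mathbf c|\mathbf d)=\mathbf a\cdot\mathbf d-\mathbf b\cdot\mathbf c$; $C^{\perp_s}$ its dual; $C$ symplectic self-orthogonal if $C\subseteq C^{\perp_s}$. Symplectic weight of $(\mathbf a|\mathbf b)$: $\#\{j:(a_j,b_j)\ne(0,0)\}$; $\mathrm{swt}(D)$ is the minimum symplectic weight of a nonzero vector of $D$. For $R\subseteq\{1,\dots,n\}$: $\pi_R(\mathbf a|\mathbf b)=(a_j|b_j)_{j\in R}$, puncturing $\pi_R(D)=\{\pi_R(\mathbf y):\mathbf y\in D\}$, shortening $\sigma_R(D)=\{\pi_R(\mathbf y):\mathbf y=(\mathbf a|\mathbf b)\in D,\ \mathrm{supp}(\mathbf a)\cup\mathrm{supp}(\mathbf b)\subseteq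 R\}$; the shortening at $I$ of a code with coordinate pairs indexed by $J\supseteq I$ is defined the same way. For an $\mathbb F_q$-linear $D\subseteq\mathbb F_q^{2n}$ and $1\le t\le\dim D$, the $t$-th generalized symplectic weight is $\mathrm{gsw}_t(D)=\min\{|R|:R\subseteq\{1,\dots,n\},\ \dim\sigma_R(D)\ge t\}$. *)

theory Defs
  imports Complex_Main "HOL-Library.Function_Algebras" "HOL-Library.Product_Plus"
begin

text \<open>A vector (a|b) of F_q^{2n}, written as a pair of coordinate functions.
  Vectors whose coordinate pairs are indexed by a finite set R are represented
  by functions vanishing outside R.\<close>

type_synonym 'a svec = "(nat \<Rightarrow> 'a) \<times> (nat \<Rightarrow> 'a)"

definition sscale :: "'a::field \<Rightarrow> 'a svec \<Rightarrow> 'a svec" where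
  "sscale c v = ((\<lambda>j. c * fst v j), (\<lambda>j. c * snd v j))"

definition ssupp :: "'a::field svec \<Rightarrow> nat set" where
  "ssupp v = {j. fst v j \<noteq> 0 \<or> snd v j \<noteq> 0}"

definition sspace :: "nat set \<Rightarrow> 'a::field svec set" where
  "sspace R = {v. ssupp v \<subseteq> R}"

definition linear_code :: "nat set \<Rightarrow> 'a::field svec set \<Rightarrow> bool" where
  "linear_code R D \<longleftrightarrow> D \<subseteq> sspace R \<and> module.subspace sscale D"

definition cdim :: "'a::field svec set \<Rightarrow> nat" where
  "cdim D = vector_space.dim sscale D"

definition sform :: "nat \<Rightarrow> 'a::field svec \<Rightarrow> 'a svec \<Rightarrow> 'a" where
  "sform n x y = (\<Sum>j\<in>{1..n}. fst x j * snd y j - snd x j * fst y j)"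

definition sdual :: "nat \<Rightarrow> 'a::field svec set \<Rightarrow> 'a svec set" where
  "sdual n C = {y \<in> sspace {1..n}. \<forall>x\<in>C. sform n x y = 0}"

definition swt :: "'a::field svec \<Rightarrow> nat" where
  "swt v = card (ssupp v)"

definition proj :: "nat set \<Rightarrow> 'a::field svec \<Rightarrow> 'a svec" where
  "proj R v = ((\<lambda>j. if j \<in> R then fst v j else 0), (\<lambda>j. if j \<in> R then snd v j else 0))"

definition puncture :: "nat set \<Rightarrow> 'a::field svec set \<Rightarrow> 'a svec set" where
  "puncture R D = proj R ` D"

definition shorten :: "nat set \<Rightarrow> 'a::field svec set \<Rightarrow> 'a svec set" where
  "shorten R D = proj R ` {y \<in> D. ssupp y \<subseteq> R}"

definition gsw :: "nat \<Rightarrow> nat \<Rightarrow> 'a::field svec set \<Rightarrow> nat" where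
  "gsw n t D = Min {card R | R. R \<subseteq> {1..n} \<and> cdim (shorten R D) \<ge> t}"

end

theory Submission
  imports Defs
begin

text \<open>Let \<open>D\<close> be the symplectic dual of \<open>C\<close>. The vectors of \<open>D\<close> that vanish on \<open>J - I\<close>
  are cut out of the \<open>2n\<close>-dimensional ambient space by at most \<open>(n - k) + 2(|J| - |I|)\<close>
  linear conditions, so they form a subspace \<open>D'\<close> of dimension at least
  \<open>t = n + k - 2|J| + 2|I|\<close>. The bound on \<open>gsw\<^sub>t(D)\<close> says that the shortening of \<open>D\<close>
  to the \<open>n - |J|\<close> coordinates outside \<open>J\<close> has dimension below \<open>t\<close>, so some \<open>y \<in> D'\<close>
  is not supported outside \<open>J\<close>. Its puncturing to \<open>J\<close> is then a nonzero vector supported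
  in \<open>I\<close>, i.e. a nonzero element of \<open>\<sigma>\<^sub>I(\<pi>\<^sub>J(D))\<close>, whereas \<open>\<sigma>\<^sub>I(C) = 0\<close> because
  every nonzero codeword of \<open>C\<close> has symplectic weight above \<open>|I|\<close>.\<close>

interpretation sv: vector_space "sscale :: 'a::field \<Rightarrow> 'a svec \<Rightarrow> 'a svec"
  by unfold_locales (auto simp: sscale_def algebra_simps prod_eq_iff fun_eq_iff)

lemma vector_space_field_self: "vector_space ((*) :: 'a::field \<Rightarrow> 'a \<Rightarrow> 'a)"
  by unfold_locales (simp_all add: algebra_simps)

context vector_space
begin

lemma dim_mono_finite:
  assumes "V \<subseteq> span W" "finite W"
  shows "dim V \<le> dim W"
proof -
  obtain B where B: "B \<subseteq> W" "independent B" "W \<subseteq> span B" "card B = dim W"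
    using basis_exists by blast
  have "V \<subseteq> span B"
    using assms(1) B(3) by (metis span_minimal subspace_span subset_trans)
  then show ?thesis
    using dim_le_card[of V B] B(1,4) assms(2) finite_subset by auto
qed

lemma dim_subset_finite:
  assumes "V \<subseteq> W" "finite W"
  shows "dim V \<le> dim W"
  using assms by (intro dim_mono_finite) (auto intro: span_base)

lemma dim_insert_le:
  assumes "finite S"
  shows "dim (insert x S) \<le> dim S + 1"
proof -
  obtain B where B: "B \<subseteq> S" "independent B" "S \<subseteq> span B" "card B = dim S"
    using basis_exists by blast
  have "finite B"
    using B(1) assms finite_subset by blast
  have "insert x S \<subseteq> span (insert x B)"
    using B(3) span_mono[of B "insert x B"] span_base[of x "insert x B"] by blast
  then have "dim (insert x S) \<le> card (insert x B)"
    using \<open>finite B\<close> by (intro dim_le_card) auto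
  also have "\<dots> \<le> dim S + 1"
    using \<open>finite B\<close> B(4) by (simp add: card_insert_if)
  finally show ?thesis .
qed

lemma subspace_kernel_functional:
  "Vector_Spaces.linear scale (*) f \<Longrightarrow> subspace {x. f x = 0}"
  using module_hom.subspace_kernel module_hom_iff_linear by blast

lemma not_in_span_if_separating_functional:
  assumes "Vector_Spaces.linear scale (*) f" "\<forall>b\<in>S. f b = 0" "f a \<noteq> 0"
  shows "a \<notin> span S"
proof -
  have "span S \<subseteq> {x. f x = 0}"
    using assms(2) subspace_kernel_functional[OF assms(1)] by (intro span_minimal) auto
  then show ?thesis
    using assms(3) by blast
qed

lemma dim_le_dim_kernel_plus_one:
  assumes W: "subspace W" "finite W" and f: "Vector_Spaces.linear scale (*) f"
  shows "dim W \<le> dim {w\<in>W. f w = 0} + 1"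
proof (cases "\<forall>w\<in>W. f w = 0")
  case True
  then have "{w\<in>W. f w = 0} = W" by blast
  then show ?thesis by simp
next
  case False
  then obtain w0 where w0: "w0 \<in> W" "f w0 \<noteq> 0" by auto
  interpret f: Vector_Spaces.linear scale "(*)" f by (fact f)
  let ?W0 = "{w\<in>W. f w = 0}"
  have "W \<subseteq> span (insert w0 ?W0)"
  proof
    fix w assume w: "w \<in> W"
    have "f (w - scale (f w / f w0) w0) = 0"
      unfolding f.diff f.scale using w0(2) by simp
    moreover have "w - scale (f w / f w0) w0 \<in> W"
      using w w0(1) W(1) by (intro subspace_diff subspace_scale)
    ultimately have "w - scale (f w / f w0) w0 \<in> ?W0"
      by blast
    then show "w \<in> span (insert w0 ?W0)"
      unfolding span_insert by (blast intro: span_base)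
  qed
  then have "dim W \<le> dim (insert w0 ?W0)"
    using W(2) by (intro dim_mono_finite) auto
  also have "\<dots> \<le> dim ?W0 + 1"
    using W(2) by (intro dim_insert_le) auto
  finally show ?thesis .
qed

lemma subspace_common_kernel:
  assumes "subspace W" "\<forall>f\<in>F. Vector_Spaces.linear scale (*) f"
  shows "subspace {w\<in>W. \<forall>f\<in>F. f w = 0}"
proof -
  have "{w\<in>W. \<forall>f\<in>F. f w = 0} = W \<inter> (\<Inter>f\<in>F. {w. f w = 0})"
    by blast
  moreover have "subspace {w. f w = 0}" if "f \<in> F" for f
    using assms(2) that subspace_kernel_functional by blast
  ultimately show ?thesis
    using assms(1) by (simp add: subspace_inter subspace_Int)
qed

lemma dim_le_dim_common_kernel_plus_card:
  assumes "finite F" "\<forall>f\<in>F. Vector_Spaces.linear scale (*) f" "subspace W" "finite W"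
  shows "dim W \<le> dim {w\<in>W. \<forall>f\<in>F. f w = 0} + card F"
  using assms(1,2)
proof (induction F rule: finite_induct)
  case empty
  then show ?case by simp
next
  case (insert f F)
  let ?WF = "{w\<in>W. \<forall>f\<in>F. f w = 0}"
  have "dim W \<le> dim ?WF + card F"
    using insert by simp
  also have "dim ?WF \<le> dim {w\<in>?WF. f w = 0} + 1"
    using insert.prems assms(3,4) subspace_common_kernel
    by (intro dim_le_dim_kernel_plus_one) auto
  also have "{w\<in>?WF. f w = 0} = {w\<in>W. \<forall>g\<in>insert f F. g w = 0}"
    by auto
  finally show ?case
    using insert.hyps by simp
qed

end

lemma linear_fst_coordinate: "Vector_Spaces.linear sscale (*) (\<lambda>v::'a::field svec. fst v j)"
  by (auto simp: Vector_Spaces.linear_iff sscale_def sv.vector_space_axioms vector_space_field_self)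

lemma linear_snd_coordinate: "Vector_Spaces.linear sscale (*) (\<lambda>v::'a::field svec. snd v j)"
  by (auto simp: Vector_Spaces.linear_iff sscale_def sv.vector_space_axioms vector_space_field_self)

lemma linear_sform: "Vector_Spaces.linear sscale (*) (sform n x :: 'a::field svec \<Rightarrow> 'a)"
  by (auto simp: Vector_Spaces.linear_iff sscale_def sv.vector_space_axioms vector_space_field_self
      sform_def algebra_simps sum.distrib sum_distrib_left sum_subtractf)

lemma sspace_eq: "sspace R = {f. \<forall>j. j \<notin> R \<longrightarrow> f j = 0} \<times> {g. \<forall>j. j \<notin> R \<longrightarrow> g j = 0}"
  by (auto simp: sspace_def ssupp_def)

lemma finite_sspace:
  assumes "finite R"
  shows "finite (sspace R :: 'a::{field,finite} svec set)"
proof -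
  have "finite {f :: nat \<Rightarrow> 'a. \<forall>j. (j \<in> R \<longrightarrow> f j \<in> UNIV) \<and> (j \<notin> R \<longrightarrow> f j = 0)}"
    using assms by (intro finite_set_of_finite_funs) auto
  then show ?thesis
    unfolding sspace_eq by simp
qed

lemma subspace_sspace: "sv.subspace (sspace R :: 'a::field svec set)"
  by (auto simp: sv.subspace_def sspace_eq sscale_def mem_Times_iff)

lemma double_card_le_dim_sspace:
  assumes "finite R"
  shows "2 * card R \<le> sv.dim (sspace R :: 'a::{field,finite} svec set)"
proof -
  define e :: "nat \<Rightarrow> nat \<Rightarrow> 'a" where "e j = (\<lambda>i. if i = j then 1 else 0)" for j
  have e_eq_iff: "e i = e j \<longleftrightarrow> i = j" for i j
    by (auto simp: e_def fun_eq_iff)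
  have e_nz: "e j \<noteq> 0" for j
    by (auto simp: e_def fun_eq_iff)
  have e_eq_0_iff: "e i j = 0 \<longleftrightarrow> i \<noteq> j" for i j
    by (simp add: e_def)
  define E where "E = (\<lambda>j. (e j, 0)) ` R \<union> (\<lambda>j. (0, e j)) ` R"
  have "card E = card R + card R"
    unfolding E_def using assms e_nz
    by (subst card_Un_disjoint) (auto simp: card_image inj_on_def e_eq_iff)
  have "a \<notin> sv.span (E - {a})" if "a \<in> E" for a
    using that[unfolded E_def]
  proof
    assume "a \<in> (\<lambda>j. (e j, 0)) ` R"
    then obtain j where a: "a = (e j, 0)" by blast
    have "\<forall>b\<in>E - {a}. fst b j = 0"
      using a by (auto simp: E_def e_eq_0_iff)
    moreover have "fst a j \<noteq> 0"
      using a by (simp add: e_def)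
    ultimately show ?thesis
      using linear_fst_coordinate sv.not_in_span_if_separating_functional by blast
  next
    assume "a \<in> (\<lambda>j. (0, e j)) ` R"
    then obtain j where a: "a = (0, e j)" by blast
    have "\<forall>b\<in>E - {a}. snd b j = 0"
      using a by (auto simp: E_def e_eq_0_iff)
    moreover have "snd a j \<noteq> 0"
      using a by (simp add: e_def)
    ultimately show ?thesis
      using linear_snd_coordinate sv.not_in_span_if_separating_functional by blast
  qed
  then have "sv.independent E"
    unfolding sv.dependent_def by blast
  then have "sv.dim E = 2 * card R"
    using \<open>card E = card R + card R\<close> by (simp add: sv.dim_eq_card_independent)
  moreover have "E \<subseteq> sspace R"
    by (auto simp: E_def e_def sspace_eq mem_Times_iff)
  ultimately show ?thesis
    using assms finite_sspace sv.dim_subset_finite by metis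
qed

lemma sform_swap: "sform n y x = - sform n x (y :: 'a::field svec)"
  unfolding sform_def sum_negf[symmetric] by (rule sum.cong) (simp_all add: algebra_simps)

lemma subspace_sform_left_kernel: "sv.subspace {x. sform n x y = (0 :: 'a::field)}"
proof -
  have "sform n x y = 0 \<longleftrightarrow> sform n y x = 0" for x
    by (subst sform_swap) simp
  then have "{x. sform n x y = 0} = {x. sform n y x = 0}"
    by blast
  moreover have "sv.subspace {x. sform n y x = 0}"
    using linear_sform by (rule sv.subspace_kernel_functional)
  ultimately show ?thesis
    by simp
qed

lemma cdim_sdual_vanishing_lower_bound:
  fixes C :: "'a::{field,finite} svec set"
  assumes C: "linear_code {1..n} C" and S: "finite S"
  shows "2 * n \<le> cdim {w \<in> sdual n C. \<forall>j\<in>S. fst w j = 0 \<and> snd w j = 0} + cdim C + 2 * card S"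
proof -
  define V where "V = (sspace {1..n} :: 'a svec set)"
  have "finite V"
    unfolding V_def by (rule finite_sspace) simp
  have "C \<subseteq> V"
    using C unfolding linear_code_def V_def by blast
  obtain B where B: "B \<subseteq> C" "sv.independent B" "C \<subseteq> sv.span B" "card B = cdim C"
    unfolding cdim_def by (rule sv.basis_exists)
  have "finite B"
    using finite_subset[OF subset_trans[OF B(1) \<open>C \<subseteq> V\<close>] \<open>finite V\<close>] .
  define F where "F = sform n ` B \<union> (\<lambda>j v. fst v j) ` S \<union> (\<lambda>j v. snd v j) ` S"
  have "finite F"
    unfolding F_def using \<open>finite B\<close> S by simp
  have "\<forall>f\<in>F. Vector_Spaces.linear sscale (*) f"
    unfolding F_def using linear_sform linear_fst_coordinate linear_snd_coordinate by blast
  have "card F \<le> cdim C + 2 * card S"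
  proof -
    have "card F \<le> card (sform n ` B) + card ((\<lambda>j (v :: 'a svec). fst v j) ` S)
        + card ((\<lambda>j (v :: 'a svec). snd v j) ` S)"
      unfolding F_def by (meson card_Un_le add_right_mono order_trans)
    also have "\<dots> \<le> card B + card S + card S"
      by (intro add_mono card_image_le \<open>finite B\<close> S)
    finally show ?thesis
      using B(4) by simp
  qed
  let ?K = "{w\<in>V. \<forall>f\<in>F. f w = 0}"
  have "?K \<subseteq> {w \<in> sdual n C. \<forall>j\<in>S. fst w j = 0 \<and> snd w j = 0}"
  proof
    fix w assume w: "w \<in> ?K"
    have "f w = 0" if "f \<in> F" for f
      using w that by blast
    then have "\<forall>b\<in>B. sform n b w = 0" and "\<forall>j\<in>S. fst w j = 0 \<and> snd w j = 0"
      unfolding F_def by auto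
    then have "sv.span B \<subseteq> {x. sform n x w = 0}"
      by (intro sv.span_minimal subspace_sform_left_kernel) auto
    then have "w \<in> sdual n C"
      using B(3) w by (auto simp: sdual_def V_def)
    then show "w \<in> {w \<in> sdual n C. \<forall>j\<in>S. fst w j = 0 \<and> snd w j = 0}"
      using \<open>\<forall>j\<in>S. fst w j = 0 \<and> snd w j = 0\<close> by blast
  qed
  then have "cdim ?K \<le> cdim {w \<in> sdual n C. \<forall>j\<in>S. fst w j = 0 \<and> snd w j = 0}"
    unfolding cdim_def using \<open>finite V\<close>
    by (intro sv.dim_subset_finite) (auto simp: sdual_def V_def)
  moreover have "sv.dim V \<le> cdim ?K + card F"
    unfolding cdim_def using \<open>finite F\<close> \<open>\<forall>f\<in>F. Vector_Spaces.linear sscale (*) f\<close> \<open>finite V\<close>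
    by (intro sv.dim_le_dim_common_kernel_plus_card) (simp_all add: V_def subspace_sspace)
  moreover have "2 * n \<le> sv.dim V"
    using double_card_le_dim_sspace[of "{1..n}"] by (simp add: V_def)
  ultimately show ?thesis
    using \<open>card F \<le> cdim C + 2 * card S\<close> by linarith
qed

lemma cdim_shorten_less_if_card_less_gsw:
  assumes "R \<subseteq> {1..n}" "card R < gsw n t D"
  shows "cdim (shorten R D) < t"
proof (rule ccontr)
  let ?Cards = "{card R | R. R \<subseteq> {1..n} \<and> cdim (shorten R D) \<ge> t}"
  assume "\<not> cdim (shorten R D) < t"
  then have "card R \<in> ?Cards"
    using assms(1) by auto
  moreover have "?Cards \<subseteq> card ` Pow {1..n}"
    by blast
  then have "finite ?Cards"
    by (rule finite_subset) simp
  ultimately have "gsw n t D \<le> card R"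
    unfolding gsw_def by (rule Min_le[rotated])
  then show False
    using assms(2) by simp
qed

lemma proj_eq_self: "ssupp y \<subseteq> R \<Longrightarrow> proj R y = y"
  unfolding proj_def ssupp_def by (auto simp: prod_eq_iff fun_eq_iff)

lemma proj_zero: "proj R 0 = 0"
  by (simp add: proj_def prod_eq_iff fun_eq_iff)

lemma mem_shorten: "y \<in> D \<Longrightarrow> ssupp y \<subseteq> R \<Longrightarrow> y \<in> shorten R D"
  unfolding shorten_def by (rule image_eqI[of y "proj R" y]) (simp_all add: proj_eq_self)

lemma shorten_subset_zero_if_swt_gt:
  assumes "finite I" "\<forall>x\<in>C. x \<noteq> 0 \<longrightarrow> swt x \<ge> card I + 1"
  shows "shorten I C \<subseteq> {0}"
proof
  fix z assume "z \<in> shorten I C"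
  then obtain x where x: "x \<in> C" "ssupp x \<subseteq> I" "z = proj I x"
    unfolding shorten_def by blast
  have "swt x \<le> card I"
    unfolding swt_def using x(2) assms(1) by (rule card_mono[rotated])
  then have "x = 0"
    using assms(2) x(1) by fastforce
  then show "z \<in> {0}"
    using x(3) by (simp add: proj_zero)
qed

lemma proj_mem_shorten_puncture:
  assumes "y \<in> D" "D \<subseteq> sspace {1..n}"
    and vanish: "\<forall>j\<in>J - I. fst y j = 0 \<and> snd y j = 0"
    and "y \<notin> shorten ({1..n} - J) D"
  shows "proj J y \<in> shorten I (puncture J D)" "proj J y \<noteq> 0"
proof -
  have "proj J y \<in> puncture J D"
    unfolding puncture_def using assms(1) by (rule imageI)
  moreover have "ssupp (proj J y) \<subseteq> I"
    using vanish by (auto simp: ssupp_def proj_def)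
  ultimately show "proj J y \<in> shorten I (puncture J D)"
    by (rule mem_shorten)
  show "proj J y \<noteq> 0"
  proof
    assume "proj J y = 0"
    have "fst y j = 0 \<and> snd y j = 0" if "j \<in> J" for j
    proof -
      have "fst y j = fst (proj J y) j" "snd y j = snd (proj J y) j"
        using that by (simp_all add: proj_def)
      then show ?thesis
        using \<open>proj J y = 0\<close> by simp
    qed
    then have "ssupp y \<subseteq> {1..n} - J"
      using assms(1,2) by (auto simp: sspace_def ssupp_def)
    then have "y \<in> shorten ({1..n} - J) D"
      using assms(1) by (intro mem_shorten)
    then show False
      using assms(4) by blast
  qed
qed

lemma shorten_puncture_sdual_has_nonzero:
  fixes C :: "'a::{field,finite} svec set"
  assumes C: "linear_code {1..n} C" and J: "J \<subseteq> {1..n}"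
    and dim_bound: "cdim C + 2 * card (J - I) + t \<le> 2 * n"
    and gsw_bound: "n - card J < gsw n t (sdual n C)"
  obtains z where "z \<in> shorten I (puncture J (sdual n C))" "z \<noteq> 0"
proof -
  define D where "D = sdual n C"
  define D' where "D' = {w \<in> D. \<forall>j\<in>J - I. fst w j = 0 \<and> snd w j = 0}"
  define R where "R = {1..n} - J"
  have "finite J"
    using J by (rule finite_subset) simp
  then have "t \<le> cdim D'"
    using cdim_sdual_vanishing_lower_bound[OF C, of "J - I"] dim_bound
    unfolding D'_def D_def by simp
  have "cdim (shorten R D) < t"
    using J \<open>finite J\<close> gsw_bound unfolding R_def D_def
    by (intro cdim_shorten_less_if_card_less_gsw[where n = n]) (auto simp: card_Diff_subset)
  have "D \<subseteq> sspace {1..n}"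
    unfolding D_def sdual_def by blast
  then have "finite D"
    using finite_sspace[of "{1..n}"] by (rule finite_subset) simp
  then have "finite (shorten R D)"
    unfolding shorten_def by simp
  have "\<not> D' \<subseteq> shorten R D"
  proof
    assume "D' \<subseteq> shorten R D"
    then have "cdim D' \<le> cdim (shorten R D)"
      unfolding cdim_def using \<open>finite (shorten R D)\<close> by (rule sv.dim_subset_finite)
    then show False
      using \<open>t \<le> cdim D'\<close> \<open>cdim (shorten R D) < t\<close> by linarith
  qed
  then obtain y where "y \<in> D'" and y_outside: "y \<notin> shorten R D"
    by blast
  then have "y \<in> D" and y_vanish: "\<forall>j\<in>J - I. fst y j = 0 \<and> snd y j = 0"
    unfolding D'_def by simp_all
  from proj_mem_shorten_puncture[OF \<open>y \<in> D\<close> \<open>D \<subseteq> sspace {1..n}\<close> y_vanish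
      y_outside[unfolded R_def]]
  show ?thesis
    unfolding D_def by (rule that)
qed

theorem proposition21:
  fixes C :: "'a::{field,finite} svec set"
    and n k :: nat and I J :: "nat set"
  assumes "linear_code {1..n} C"
    and "C \<subseteq> sdual n C"
    and "k \<le> n"
    and "cdim C = n - k"
    and "I \<noteq> {}" and "I \<subset> J" and "J \<subseteq> {1..n}"
    and "\<forall>x\<in>C. x \<noteq> 0 \<longrightarrow> swt x \<ge> card I + 1"
    and "int n + int k - 2 * int (card J) + 2 * int (card I) > 0"
    and "gsw n (nat (int n + int k - 2 * int (card J) + 2 * int (card I))) (sdual n C)
           \<ge> n - card J + 1"
  shows "shorten I (puncture J (sdual n C)) \<noteq> shorten I C"
proof -
  define t where "t = nat (int n + int k - 2 * int (card J) + 2 * int (card I))"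
  have "finite J"
    using assms(7) by (rule finite_subset) simp
  have "finite I"
    using finite_subset[OF psubset_imp_subset[OF assms(6)] \<open>finite J\<close>] .
  have "card (J - I) = card J - card I"
    using assms(6) \<open>finite I\<close> by (simp add: card_Diff_subset psubset_imp_subset)
  moreover have "card I < card J"
    using \<open>finite J\<close> assms(6) by (rule psubset_card_mono)
  moreover have "card J \<le> n"
    using card_mono[OF _ assms(7)] by simp
  ultimately have "cdim C + 2 * card (J - I) + t \<le> 2 * n"
    unfolding t_def using assms(3,4,9) by linarith
  moreover have "n - card J < gsw n t (sdual n C)"
    using assms(10) unfolding t_def by simp
  ultimately obtain z where "z \<in> shorten I (puncture J (sdual n C))" "z \<noteq> 0"
    by (rule shorten_puncture_sdual_has_nonzero[OF assms(1,7)])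
  moreover have "shorten I C \<subseteq> {0}"
    using \<open>finite I\<close> assms(8) by (rule shorten_subset_zero_if_swt_gt)
  ultimately show ?thesis
    by blast
qed

end
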